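(* Let $x,y>0$ and $r,s\in\mathbb{R}$, and let $F_{r,s;x,y}(w)=E(r+w,s+w;x,y)$ for $w\in\mathbb{R}$. Then $F_{r,s;x,y}$ is logarithmically convex on $\bigl(-\infty,-\frac{s+r}{2}\bigr)$ and logarithmically concave on $\bigl(-\frac{s+r}{2},\infty\bigr)$, i.e. $\frac{d^2}{dw^2}\ln F_{r,s;x,y}(w)\ge0$ for $w<-\frac{r+s}2$ and $\le 0$ for $w>-\frac{r+s}2$.
   Context: For $x,y>0$ and $r,s\in\mathbb{R}$ the extended mean values are defined by $E(r,s;x,y)=\bigl(\frac{r}{s}\cdot\frac{y^s-x^s}{y^r-x^r}\bigr)^{1/(s-r)}$ if $rs(r-s)(x-y)\neq0$; $E(r,0;x,y)=E(0,r;x,y)=\bigl(\frac1r\cdot\frac{y^r-x^r}{\ln y-\ln x}\bigr)^{1/r}$ if $r(x-y)\neq0$; $E(r,r;x,y)=e^{-1/r}\bigl(\frac{x^{x^r}}{y^{y^r}}\bigr)^{1/(x^r-y^r)}$ if $r(x-y)\neq0$; $E(0,0;x,y)=\sqrt{xy}$ if $x\neq y$; $E(r,s;x,x)=x$. *)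

theory Defs
  imports "HOL-Analysis.Analysis"
begin

definition ext_mean :: "real \<Rightarrow> real \<Rightarrow> real \<Rightarrow> real \<Rightarrow> real" where
  "ext_mean r s x y =
    (if x = y then x
     else if r = 0 \<and> s = 0 then sqrt (x * y)
     else if r = s then
       exp (- 1 / r) * ((x powr (x powr r)) / (y powr (y powr r))) powr (1 / (x powr r - y powr r))
     else if s = 0 then ((y powr r - x powr r) / (r * (ln y - ln x))) powr (1 / r)
     else if r = 0 then ((y powr s - x powr s) / (s * (ln y - ln x))) powr (1 / s)
     else ((r / s) * ((y powr s - x powr s) / (y powr r - x powr r))) powr (1 / (s - r)))"

end

theory Submission
  imports Defs "HOL-Real_Asymp.Real_Asymp"
begin

(* Let L(u) = ln (sinh u / u), so that L' is the Langevin function coth u - 1/u.  For x, y > 0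
   put mu = (ln x + ln y)/2, c = (ln y - ln x)/2 and kernel(t) = mu*t + L(c*t); for t \<noteq> 0
   this is the logarithm of the logarithmic mean of x^t and y^t.  Then ln E(p,q;x,y) is the
   divided difference (kernel q - kernel p)/(q - p), and kernel'(p) on the diagonal.  Hence
   d^2/dw^2 ln E(r+w,s+w) is a divided difference of kernel''(t) = c^2 L''(c*t) over
   [r+w, s+w] (resp. kernel''' at r+w), and its sign is governed by the midpoint w + (r+s)/2
   because L'' is even and decreasing on [0,\<infinity>). *)

section \<open>The Langevin function and its derivatives\<close>

definition log_sinhc :: "real \<Rightarrow> real" where
  "log_sinhc u = (if u = 0 then 0 else ln (sinh u / u))"

definition langevin :: "real \<Rightarrow> real" where
  "langevin u = (if u = 0 then 0 else cosh u / sinh u - 1 / u)"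

definition dlangevin :: "real \<Rightarrow> real" where
  "dlangevin u = (if u = 0 then 1/3 else 1 / u^2 - 1 / sinh u ^ 2)"

definition d2langevin :: "real \<Rightarrow> real" where
  "d2langevin u = (if u = 0 then 0 else -2 / u^3 + 2 * cosh u / sinh u ^ 3)"

lemma sinh_div_pos: "u \<noteq> (0::real) \<Longrightarrow> sinh u / u > 0"
  by (cases "u > 0") (auto simp: divide_pos_pos divide_neg_neg)

lemma log_sinhc_deriv: "(log_sinhc has_real_derivative langevin u) (at u)"
proof (cases "u = 0")
  case True
  have "((\<lambda>u::real. ln (sinh u / u) / u) \<longlongrightarrow> 0) (at 0)" by real_asymp
  then have "((\<lambda>v. (log_sinhc v - log_sinhc 0) / (v - 0)) \<longlongrightarrow> 0) (at 0)"
    by (rule Lim_transform_eventually) (auto simp: eventually_at_filter log_sinhc_def)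
  then show ?thesis using True by (simp add: has_field_derivative_iff langevin_def)
next
  case False
  have "((\<lambda>v. ln (sinh v / v)) has_real_derivative
          (1 / (sinh u / u)) * ((cosh u * u - sinh u * 1) / (u * u))) (at u)"
    using False sinh_div_pos[OF False]
    by (intro DERIV_chain2[where f=ln] DERIV_ln_divide DERIV_divide)
       (auto intro!: derivative_eq_intros)
  moreover have "(1 / (sinh u / u)) * ((cosh u * u - sinh u * 1) / (u * u)) = langevin u"
    using False by (simp add: langevin_def field_simps)
  ultimately have "((\<lambda>v. ln (sinh v / v)) has_real_derivative langevin u) (at u)" by simp
  then show ?thesis
    by (rule has_field_derivative_transform_within_open[where S="-{0}"])
       (use False in \<open>auto simp: log_sinhc_def\<close>)
qed

lemma langevin_deriv: "(langevin has_real_derivative dlangevin u) (at u)"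
proof (cases "u = 0")
  case True
  have "((\<lambda>u::real. (cosh u / sinh u - 1/u) / u) \<longlongrightarrow> 1/3) (at 0)" by real_asymp
  then have "((\<lambda>v. (langevin v - langevin 0) / (v - 0)) \<longlongrightarrow> 1/3) (at 0)"
    by (rule Lim_transform_eventually) (auto simp: eventually_at_filter langevin_def)
  then show ?thesis using True by (simp add: has_field_derivative_iff dlangevin_def)
next
  case False
  have "((\<lambda>v. cosh v / sinh v - 1 / v) has_real_derivative
          (sinh u * sinh u - cosh u * cosh u) / (sinh u * sinh u) - (- (1 / (u*u)))) (at u)"
    using False by (auto intro!: derivative_eq_intros simp: power2_eq_square)
  moreover have "(sinh u * sinh u - cosh u * cosh u) / (sinh u * sinh u) - (- (1 / (u*u)))
                 = dlangevin u"
    using False cosh_square_eq[of u] by (simp add: dlangevin_def field_simps power2_eq_square)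
  ultimately have "((\<lambda>v. cosh v / sinh v - 1 / v) has_real_derivative dlangevin u) (at u)"
    by simp
  then show ?thesis
    by (rule has_field_derivative_transform_within_open[where S="-{0}"])
       (use False in \<open>auto simp: langevin_def\<close>)
qed

lemma dlangevin_deriv: "(dlangevin has_real_derivative d2langevin u) (at u)"
proof (cases "u = 0")
  case True
  have "((\<lambda>u::real. (1/u^2 - 1/ sinh u ^2 - 1/3) / u) \<longlongrightarrow> 0) (at 0)" by real_asymp
  then have "((\<lambda>v. (dlangevin v - dlangevin 0) / (v - 0)) \<longlongrightarrow> 0) (at 0)"
    by (rule Lim_transform_eventually) (auto simp: eventually_at_filter dlangevin_def)
  then show ?thesis using True by (simp add: has_field_derivative_iff d2langevin_def)
next
  case False
  have "((\<lambda>v. 1 / v^2 - 1 / sinh v ^ 2) has_real_derivative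
          (- (2 * u) / (u^2 * u^2)) - (- (2 * sinh u * cosh u) / (sinh u ^2 * sinh u ^ 2))) (at u)"
    using False by (auto intro!: derivative_eq_intros simp: power2_eq_square)
  moreover have "(- (2 * u) / (u^2 * u^2)) - (- (2 * sinh u * cosh u) / (sinh u ^2 * sinh u ^ 2))
                 = d2langevin u"
    using False by (simp add: d2langevin_def field_simps power2_eq_square power3_eq_cube)
  ultimately have "((\<lambda>v. 1 / v^2 - 1 / sinh v ^ 2) has_real_derivative d2langevin u) (at u)"
    by simp
  then show ?thesis
    by (rule has_field_derivative_transform_within_open[where S="-{0}"])
       (use False in \<open>auto simp: dlangevin_def\<close>)
qed

text \<open>The key inequality \<open>u cosh(u)^(1/3) \<le> sinh u\<close> for \<open>u \<ge> 0\<close>: the difference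
  \<open>sinh v cosh(v)^(-1/3) - v\<close> vanishes at 0 and has the derivative below, which is
  \<open>(t^2 - 1)^2 (2t^2 + 1) / (3t^4) \<ge> 0\<close> in terms of \<open>t = cosh(v)^(1/3)\<close>.\<close>

lemma sinh_cbrt_cosh_deriv_nonneg:
  fixes v :: real
  shows "cosh v * cosh v powr (-1/3) - (1/3) * sinh v ^ 2 * cosh v powr (-1/3 - 1) - 1 \<ge> 0"
proof -
  define t where "t = cosh v powr (1/3)"
  have t_pos: "t > 0" by (simp add: t_def)
  have t_cube: "t ^ 3 = cosh v"
    by (simp add: t_def powr_realpow[symmetric] powr_powr)
  have inv_t: "cosh v powr (-1/3) = 1 / t"
    by (simp add: t_def powr_minus_divide powr_divide)
  have "cosh v powr (-1/3 - 1) = cosh v powr (-1/3) / cosh v"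
    using powr_diff[of "cosh v" "-1/3" 1] by simp
  then have inv_t4: "cosh v powr (-1/3 - 1) = 1 / t^4"
    using inv_t t_cube t_pos by (simp add: field_simps power_numeral_reduce)
  have "t^6 = (t^3)^2" by (simp flip: power_mult)
  then have sinh_sq: "sinh v ^ 2 = t^6 - 1" using cosh_square_eq[of v] t_cube by simp
  have "cosh v * cosh v powr (-1/3) - (1/3) * sinh v ^ 2 * cosh v powr (-1/3 - 1) - 1
        = t^3 / t - (1/3) * (t^6 - 1) / t^4 - 1"
    unfolding inv_t inv_t4 sinh_sq t_cube by simp
  also have "\<dots> = (t^2 - 1)^2 * (2*t^2 + 1) / (3 * t^4)"
    using t_pos by (simp add: field_simps power2_eq_square) (simp add: algebra_simps power_numeral_reduce)
  also have "\<dots> \<ge> 0" using t_pos by simp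
  finally show ?thesis .
qed

lemma u_cbrt_cosh_le_sinh:
  fixes u :: real assumes "u \<ge> 0"
  shows "u * cosh u powr (1/3) \<le> sinh u"
proof -
  define m where "m = (\<lambda>v::real. sinh v * cosh v powr (-1/3) - v)"
  have "(m has_real_derivative
          cosh v * cosh v powr (-1/3) - (1/3) * sinh v ^ 2 * cosh v powr (-1/3 - 1) - 1) (at v)"
    for v
    unfolding m_def by (auto intro!: derivative_eq_intros DERIV_fun_powr simp: power2_eq_square)
  then have "m 0 \<le> m u"
    using DERIV_nonneg_imp_nondecreasing[of 0 u m] sinh_cbrt_cosh_deriv_nonneg assms by blast
  then have "u * cosh u powr (1/3) \<le> sinh u * (cosh u powr (-1/3) * cosh u powr (1/3))"
    by (simp add: m_def mult_right_mono mult.assoc[symmetric])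
  also have "cosh u powr (-1/3) * cosh u powr (1/3) = 1"
    by (simp add: powr_add[symmetric])
  finally show ?thesis by simp
qed

lemma u_cube_cosh_le_sinh_cube:
  fixes u :: real assumes "u \<ge> 0"
  shows "u^3 * cosh u \<le> sinh u ^ 3"
proof -
  have "(u * cosh u powr (1/3))^3 \<le> sinh u ^ 3"
    using u_cbrt_cosh_le_sinh[OF assms] assms by (intro power_mono) auto
  moreover have "(cosh u powr (1/3))^3 = cosh u"
    by (simp add: powr_realpow[symmetric] powr_powr)
  ultimately show ?thesis by (simp add: power_mult_distrib)
qed

lemma d2langevin_nonpos: "u \<ge> 0 \<Longrightarrow> d2langevin u \<le> 0"
proof (cases "u = 0")
  case False
  assume u: "u \<ge> 0"
  then have "u > 0" "sinh u > 0" using False by auto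
  then have "cosh u / sinh u ^ 3 \<le> 1 / u^3"
    using u_cube_cosh_le_sinh_cube[OF u] by (simp add: divide_simps mult.commute)
  then show ?thesis using False by (simp add: d2langevin_def)
qed (simp add: d2langevin_def)

lemma d2langevin_odd: "d2langevin (-u) = - d2langevin u"
  by (simp add: d2langevin_def)

lemma mult_d2langevin_nonpos: "u * d2langevin u \<le> 0"
proof (cases "u \<ge> 0")
  case True then show ?thesis using d2langevin_nonpos[OF True] by (simp add: mult_nonneg_nonpos)
next
  case False
  then have "d2langevin (-u) \<le> 0" by (intro d2langevin_nonpos) simp
  then have "d2langevin u \<ge> 0" by (simp add: d2langevin_odd)
  then show ?thesis using False by (simp add: mult_nonpos_nonneg)
qed

lemma dlangevin_antitone_sq: "p^2 \<le> q^2 \<Longrightarrow> dlangevin q \<le> dlangevin p"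
proof -
  assume "p^2 \<le> q^2"
  then have "\<bar>p\<bar> \<le> \<bar>q\<bar>" using abs_le_square_iff by blast
  then have "dlangevin \<bar>q\<bar> \<le> dlangevin \<bar>p\<bar>"
    by (intro deriv_nonpos_imp_antimono[of _ _ dlangevin d2langevin])
       (auto intro: dlangevin_deriv d2langevin_nonpos)
  moreover have "dlangevin \<bar>u\<bar> = dlangevin u" for u by (simp add: dlangevin_def)
  ultimately show ?thesis by simp
qed

section \<open>Convexity of shifted divided differences\<close>

lemma divided_difference_sign:
  fixes g :: "real \<Rightarrow> real"
  assumes mono: "\<And>p q. p^2 \<le> q^2 \<Longrightarrow> g q \<le> g p"
  shows "(a + b) * ((g a - g b) / (a - b)) \<le> 0"
proof -
  have "(a^2 - b^2) * (g a - g b) \<le> 0"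
    using mono[of a b] mono[of b a] by (cases "a^2 \<le> b^2") (auto simp: mult_le_0_iff)
  moreover have "(a + b) * ((g a - g b) / (a - b)) = (a^2 - b^2) * (g a - g b) / (a - b)^2"
  proof -
    have "a^2 - b^2 = (a + b) * (a - b)" by (simp add: power2_eq_square algebra_simps)
    then show ?thesis by (cases "a = b") (simp_all add: power2_eq_square)
  qed
  ultimately show ?thesis by (simp add: divide_nonpos_nonneg)
qed

lemma shifted_divided_difference_convex:
  fixes f f' g :: "real \<Rightarrow> real"
  assumes f': "\<And>t. (f has_real_derivative f' t) (at t)"
    and g: "\<And>t. (f' has_real_derivative g t) (at t)"
    and mono: "\<And>p q. p^2 \<le> q^2 \<Longrightarrow> g q \<le> g p"
    and "a \<noteq> b"
  defines "F \<equiv> \<lambda>w. (f (b + w) - f (a + w)) / (b - a)"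
  shows "convex_on {..< -(a + b) / 2} F \<and> concave_on {-(a + b) / 2 <..} F"
proof -
  have F': "(F has_real_derivative (f' (b + w) - f' (a + w)) / (b - a)) (at w)" for w
    unfolding F_def using \<open>a \<noteq> b\<close> by (auto intro!: derivative_eq_intros DERIV_chain2[OF f'])
  have F'': "((\<lambda>w. (f' (b + w) - f' (a + w)) / (b - a)) has_real_derivative
               (g (b + w) - g (a + w)) / (b - a)) (at w)" for w
    using \<open>a \<noteq> b\<close> by (auto intro!: derivative_eq_intros DERIV_chain2[OF g])
  have sign: "((b + w) + (a + w)) * ((g (b + w) - g (a + w)) / (b - a)) \<le> 0" for w
    using divided_difference_sign[where a="b + w" and b="a + w", OF mono] by simp
  have F''_nonneg: "(g (b + w) - g (a + w)) / (b - a) \<ge> 0" if "w < -(a + b) / 2" for w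
  proof -
    have "(b + w) + (a + w) < 0" using that by (simp add: field_simps)
    then show ?thesis using sign[of w] by (smt (verit) mult_le_0_iff)
  qed
  have F''_nonpos: "(g (b + w) - g (a + w)) / (b - a) \<le> 0" if "w > -(a + b) / 2" for w
  proof -
    have "(b + w) + (a + w) > 0" using that by (simp add: field_simps)
    then show ?thesis using sign[of w] by (smt (verit) mult_le_0_iff)
  qed
  show ?thesis
  proof
    show "convex_on {..< -(a + b) / 2} F"
      by (rule f''_ge0_imp_convex[OF _ F' F'']) (simp_all add: F''_nonneg)
    show "concave_on {-(a + b) / 2 <..} F"
      by (rule f''_le0_imp_concave[OF _ F' F'']) (simp_all add: F''_nonpos)
  qed
qed

lemma shifted_derivative_convex:
  fixes f' g h :: "real \<Rightarrow> real"
  assumes g: "\<And>t. (f' has_real_derivative g t) (at t)"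
    and h: "\<And>t. (g has_real_derivative h t) (at t)"
    and sign: "\<And>u. u * h u \<le> 0"
  shows "convex_on {..< -a} (\<lambda>w. f' (a + w)) \<and> concave_on {-a <..} (\<lambda>w. f' (a + w))"
proof -
  have G: "((\<lambda>w. f' (a + w)) has_real_derivative g (a + w)) (at w)" for w
    by (rule DERIV_chain3[OF g, THEN DERIV_cong]) (auto intro!: derivative_eq_intros)
  have H: "((\<lambda>w. g (a + w)) has_real_derivative h (a + w)) (at w)" for w
    by (rule DERIV_chain3[OF h, THEN DERIV_cong]) (auto intro!: derivative_eq_intros)
  have H_nonneg: "h (a + w) \<ge> 0" if "w < -a" for w
    using sign[of "a + w"] that by (smt (verit) mult_le_0_iff)
  have H_nonpos: "h (a + w) \<le> 0" if "w > -a" for w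
    using sign[of "a + w"] that by (smt (verit) mult_le_0_iff)
  show ?thesis
  proof
    show "convex_on {..< -a} (\<lambda>w. f' (a + w))"
      by (rule f''_ge0_imp_convex[OF _ G H]) (simp_all add: H_nonneg)
    show "concave_on {-a <..} (\<lambda>w. f' (a + w))"
      by (rule f''_le0_imp_concave[OF _ G H]) (simp_all add: H_nonpos)
  qed
qed

section \<open>The extended mean as a divided difference\<close>

definition kernel :: "real \<Rightarrow> real \<Rightarrow> real \<Rightarrow> real" where
  "kernel \<mu> c t = \<mu> * t + log_sinhc (c * t)"

definition kernel' :: "real \<Rightarrow> real \<Rightarrow> real \<Rightarrow> real" where
  "kernel' \<mu> c t = \<mu> + c * langevin (c * t)"

lemma kernel_deriv: "(kernel \<mu> c has_real_derivative kernel' \<mu> c t) (at t)"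
  unfolding kernel_def[abs_def] kernel'_def
  by (auto intro!: derivative_eq_intros DERIV_chain2[OF log_sinhc_deriv])

lemma kernel'_deriv: "(kernel' \<mu> c has_real_derivative c^2 * dlangevin (c * t)) (at t)"
  unfolding kernel'_def[abs_def]
  by (auto intro!: derivative_eq_intros DERIV_chain2[OF langevin_deriv] simp: power2_eq_square)

lemma kernel''_deriv:
  "((\<lambda>t. c^2 * dlangevin (c * t)) has_real_derivative c^3 * d2langevin (c * t)) (at t)"
  by (auto intro!: derivative_eq_intros DERIV_chain2[OF dlangevin_deriv]
           simp: power2_eq_square power3_eq_cube)

lemma kernel''_antitone_sq: "p^2 \<le> q^2 \<Longrightarrow> c^2 * dlangevin (c * q) \<le> c^2 * dlangevin (c * p)"
  by (intro mult_left_mono dlangevin_antitone_sq) (auto simp: power_mult_distrib mult_left_mono)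

lemma kernel'''_sign: "t * (c^3 * d2langevin (c * t)) \<le> 0"
proof -
  have "t * (c^3 * d2langevin (c * t)) = c^2 * ((c * t) * d2langevin (c * t))"
    by (simp add: power2_eq_square power3_eq_cube)
  also have "\<dots> \<le> 0"
    by (rule mult_nonneg_nonpos[OF zero_le_power2 mult_d2langevin_nonpos])
  finally show ?thesis .
qed

lemma powr_diff_sinh:
  fixes x y t :: real
  assumes "x > 0" "y > 0"
  shows "y powr t - x powr t = 2 * exp ((ln x + ln y)/2 * t) * sinh ((ln y - ln x)/2 * t)"
proof -
  have "2 * exp ((ln x + ln y)/2 * t) * sinh ((ln y - ln x)/2 * t)
        = exp ((ln x + ln y)/2 * t) * exp ((ln y - ln x)/2 * t)
          - exp ((ln x + ln y)/2 * t) * exp (- ((ln y - ln x)/2 * t))"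
    by (simp add: sinh_def algebra_simps)
  also have "\<dots> = exp (t * ln y) - exp (t * ln x)"
    by (simp add: exp_add[symmetric] algebra_simps add_divide_distrib[symmetric]
                  diff_divide_distrib[symmetric])
  also have "\<dots> = y powr t - x powr t" using assms by (simp add: powr_def)
  finally show ?thesis by simp
qed

lemma exp_kernel:
  fixes x y t :: real
  assumes "x > 0" "y > 0" "x \<noteq> y" "t \<noteq> 0"
  defines "\<mu> \<equiv> (ln x + ln y)/2" and "c \<equiv> (ln y - ln x)/2"
  shows "(y powr t - x powr t) / (t * (ln y - ln x)) = exp (kernel \<mu> c t)"
proof -
  have "c \<noteq> 0" using assms by (auto simp: c_def)
  then have ct: "c * t \<noteq> 0" using assms by simp
  have "exp (kernel \<mu> c t) = exp (\<mu> * t) * (sinh (c * t) / (c * t))"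
    using sinh_div_pos[OF ct] ct by (simp add: kernel_def log_sinhc_def exp_add)
  also have "\<dots> = (y powr t - x powr t) / (t * (ln y - ln x))"
    using powr_diff_sinh[OF assms(1,2), of t] by (simp add: \<mu>_def c_def field_simps)
  finally show ?thesis by simp
qed

lemma ln_ext_mean_offdiag:
  fixes x y p q :: real
  assumes xy: "x > 0" "y > 0" and "p \<noteq> q"
  defines "\<mu> \<equiv> (ln x + ln y)/2" and "c \<equiv> (ln y - ln x)/2"
  shows "ln (ext_mean p q x y) = (kernel \<mu> c q - kernel \<mu> c p) / (q - p)"
proof (cases "x = y")
  case True
  then show ?thesis using \<open>p \<noteq> q\<close>
    by (simp add: ext_mean_def kernel_def log_sinhc_def \<mu>_def c_def field_simps)
next
  case False
  have R: "(y powr t - x powr t) / (t * (ln y - ln x)) = exp (kernel \<mu> c t)" if "t \<noteq> 0" for t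
    using exp_kernel[OF xy False that] by (simp add: \<mu>_def c_def)
  have K0: "kernel \<mu> c 0 = 0" by (simp add: kernel_def log_sinhc_def)
  consider "p = 0" | "q = 0" | "p \<noteq> 0" "q \<noteq> 0" by blast
  then show ?thesis
  proof cases
    case 1
    then have "ext_mean p q x y = exp (kernel \<mu> c q) powr (1 / q)"
      using \<open>p \<noteq> q\<close> False R[of q] by (simp add: ext_mean_def)
    then show ?thesis using 1 K0 by simp
  next
    case 2
    then have "ext_mean p q x y = exp (kernel \<mu> c p) powr (1 / p)"
      using \<open>p \<noteq> q\<close> False R[of p] by (simp add: ext_mean_def)
    then show ?thesis using 2 K0 \<open>p \<noteq> q\<close> by (simp add: field_simps)
  next
    case 3
    have "y powr p - x powr p \<noteq> 0" "ln y - ln x \<noteq> 0"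
      using R[of p] 3 False xy by auto
    then have "p / q * ((y powr q - x powr q) / (y powr p - x powr p))
          = ((y powr q - x powr q) / (q * (ln y - ln x)))
            / ((y powr p - x powr p) / (p * (ln y - ln x)))"
      using 3 by (simp add: divide_simps)
    also have "\<dots> = exp (kernel \<mu> c q - kernel \<mu> c p)"
      using R[of p] R[of q] 3 by (simp add: exp_diff)
    finally have "ext_mean p q x y = exp (kernel \<mu> c q - kernel \<mu> c p) powr (1 / (q - p))"
      using 3 \<open>p \<noteq> q\<close> False by (simp add: ext_mean_def)
    then show ?thesis by simp
  qed
qed

text \<open>On the diagonal, \<open>ln E(p,p)\<close> is the derivative of the kernel at \<open>p\<close>: for
  \<open>p \<noteq> 0\<close> both equal \<open>(y^p ln y - x^p ln x)/(y^p - x^p) - 1/p\<close>, the derivative of the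
  logarithm of the logarithmic mean of \<open>x^t\<close> and \<open>y^t\<close>.\<close>

lemma ln_ext_mean_diag:
  fixes x y p :: real
  assumes xy: "x > 0" "y > 0"
  defines "\<mu> \<equiv> (ln x + ln y)/2" and "c \<equiv> (ln y - ln x)/2"
  shows "ln (ext_mean p p x y) = kernel' \<mu> c p"
proof (cases "x = y \<or> p = 0")
  case True
  then show ?thesis using xy
    by (auto simp: ext_mean_def kernel'_def langevin_def ln_sqrt ln_mult \<mu>_def c_def)
next
  case False
  then have "x \<noteq> y" "p \<noteq> 0" by auto
  define d where "d = ln y - ln x"
  define N where "N = (\<lambda>t. y powr t - x powr t)"
  have R: "N t / (t * d) = exp (kernel \<mu> c t)" if "t \<noteq> 0" for t
    using exp_kernel[OF xy \<open>x \<noteq> y\<close> that] by (simp add: \<mu>_def c_def N_def d_def)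
  have d: "d \<noteq> 0" using xy \<open>x \<noteq> y\<close> by (simp add: d_def)
  have Np: "N p \<noteq> 0" using R[OF \<open>p \<noteq> 0\<close>] by auto
  define D where "D = (y powr p * ln y - x powr p * ln x) / N p - 1 / p"
  have "((\<lambda>t. ln (N t / (t * d))) has_real_derivative
         (1 / (N p / (p * d))) * (((y powr p * ln y - x powr p * ln x) * (p * d) - N p * d)
           / ((p * d) * (p * d)))) (at p)"
    using xy R[OF \<open>p \<noteq> 0\<close>] d \<open>p \<noteq> 0\<close> unfolding N_def
    by (auto intro!: derivative_eq_intros simp: powr_def)
  moreover have "(1 / (N p / (p * d))) * (((y powr p * ln y - x powr p * ln x) * (p * d) - N p * d)
           / ((p * d) * (p * d))) = D"
    using d Np \<open>p \<noteq> 0\<close> by (simp add: D_def field_simps)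
  ultimately have "((\<lambda>t. ln (N t / (t * d))) has_real_derivative D) (at p)" by simp
  then have "(kernel \<mu> c has_real_derivative D) (at p)"
    by (rule has_field_derivative_transform_within_open[where S="-{0}"])
       (use \<open>p \<noteq> 0\<close> R in auto)
  then have "kernel' \<mu> c p = D" using kernel_deriv by (rule DERIV_unique[rotated])
  moreover have "ln (ext_mean p p x y) = D"
    using xy \<open>x \<noteq> y\<close> \<open>p \<noteq> 0\<close> Np
    by (simp add: ext_mean_def ln_div ln_mult D_def N_def field_simps)
  ultimately show ?thesis by simp
qed

theorem theorem3:
  fixes x y r s :: real
  assumes "x > 0" and "y > 0"
  shows "convex_on {..< - (r + s) / 2} (\<lambda>w. ln (ext_mean (r + w) (s + w) x y))
       \<and> concave_on {- (r + s) / 2 <..} (\<lambda>w. ln (ext_mean (r + w) (s + w) x y))"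
proof -
  define \<mu> where "\<mu> = (ln x + ln y)/2"
  define c where "c = (ln y - ln x)/2"
  show ?thesis
  proof (cases "r = s")
    case True
    have "(\<lambda>w. ln (ext_mean (r + w) (s + w) x y)) = (\<lambda>w. kernel' \<mu> c (r + w))"
      using True ln_ext_mean_diag[OF assms] by (simp add: \<mu>_def c_def)
    moreover have "- (r + s) / 2 = - r" using True by simp
    ultimately show ?thesis
      using shifted_derivative_convex[OF kernel'_deriv kernel''_deriv kernel'''_sign] by simp
  next
    case False
    have "(\<lambda>w. ln (ext_mean (r + w) (s + w) x y))
          = (\<lambda>w. (kernel \<mu> c (s + w) - kernel \<mu> c (r + w)) / (s - r))"
      using False ln_ext_mean_offdiag[OF assms] by (simp add: \<mu>_def c_def)
    then show ?thesis
      using shifted_divided_difference_convex[OF kernel_deriv kernel'_deriv kernel''_antitone_sq False]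
      by simp
  qed
qed

end
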